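(* Let $F$ be a continuous, order-preserving, and additively homogeneous self-map of $\mathbb{T}^n$. Then \[ \operatorname{cond}_{\mathbb{R}}(F) = |\underline{\mathrm{cw}}(F)|^{-1} \quad\text{and}\quad \operatorname{cond}(F) = |\overline{\mathrm{cw}}(F)|^{-1}, \] with the conventions $0^{-1}=+\infty$ and $(+\infty)^{-1}=0$.
   Context: $\mathbb{T} = \mathbb{R}\cup\{-\infty\}$ is the tropical (max-plus) semifield. $\mathbb{T}$ carries the topology of the metric $(a,b)\mapsto|e^a-e^b|$, and $\mathbb{T}^n$ carries the product topology. $\mathbb{T}^n$ is ordered entrywise, and $\mathbb{0}\in\mathbb{T}^n$ denotes the vector with all entries $-\infty$. For $\lambda\in\mathbb{T}$ and $x\in\mathbb{T}^n$, $\lambda+x$ is the vector with entries $\lambda+x_i$; for $u\in\mathbb{R}^n$, $u+F$ denotes the map $x\mapsto u+F(x)$ (entrywise addition). A self-map $F$ of $\mathbb{T}^n$ is order-preserving if $x\le y$ implies $F(x)\le F(y)$, and additively homogeneous if $F(\lambda+x)=\lambda+F(x)$ for all $\lambda\in\mathbb{T}$ and $x\in\mathbb{T}^n$. Notation: $y\ll z$ means $y_i<z_i$ for all $i$; $\|u\|_\infty=\max_i|u_i|$. Upper and lower Collatz–Wielandt numbers: $\overline{\mathrm{cw}}(F)=\inf\{\mu\in\mathbb{R}: \exists z\in\mathbb{R}^n,\ F(z)\le \mu+z\}$ and $\underline{\mathrm{cw}}(F)=\sup\{\mu\in\mathbb{R}: \exists z\in\mathbb{R}^n,\ F(z)\ge\mu+z\}$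 (with $\inf\emptyset=+\infty$, $\sup\emptyset=-\infty$). Feasibility problems: $\mathscr{P}(F)$ is the problem "does there exist $x\in\mathbb{T}^n$ with $x\ne\mathbb{0}$ and $x\le F(x)$?"; $\mathscr{P}_{\mathbb{R}}(F)$ is the problem "does there exist $x\in\mathbb{R}^n$ with $x\ll F(x)$?". A problem is feasible if such an $x$ exists, infeasible otherwise. Condition numbers: if $\mathscr{P}(F)$ is feasible, $\operatorname{cond}(F)=(\inf\{\|u\|_\infty: u\in\mathbb{R}^n,\ \mathscr{P}(u+F)\text{ infeasible}\})^{-1}$; if $\mathscr{P}(F)$ is infeasible, $\operatorname{cond}(F)=(\inf\{\|u\|_\infty: u\in\mathbb{R}^n,\ \mathscr{P}(u+F)\text{ feasible}\})^{-1}$, with $0^{-1}=+\infty$ and $(+\infty)^{-1}=0$ (infimum of the empty set is $+\infty$). $\operatorname{cond}_{\mathbb{R}}(F)$ is defined identically with $\mathscr{P}$ replaced by $\mathscr{P}_{\mathbb{R}}$. *)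

theory Defs
  imports "HOL-Analysis.Analysis"
begin

text \<open>The tropical semifield T = R \<union> {-\<infinity>} is modelled as the subset of ereal
  excluding \<infinity>. Its topology (metric |e^a - e^b|) coincides with the subspace
  topology of ereal.\<close>

definition trop_vecs :: "('n::finite \<Rightarrow> ereal) set" where
  "trop_vecs = {x. \<forall>i. x i \<noteq> \<infinity>}"

definition trop_zero :: "'n::finite \<Rightarrow> ereal" where
  "trop_zero = (\<lambda>i. -\<infinity>)"

definition trop_shift :: "ereal \<Rightarrow> ('n::finite \<Rightarrow> ereal) \<Rightarrow> ('n \<Rightarrow> ereal)" where
  "trop_shift l x = (\<lambda>i. l + x i)"

definition order_preserving :: "(('n::finite \<Rightarrow> ereal) \<Rightarrow> ('n \<Rightarrow> ereal)) \<Rightarrow> bool" where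
  "order_preserving F \<longleftrightarrow> (\<forall>x\<in>trop_vecs. \<forall>y\<in>trop_vecs. x \<le> y \<longrightarrow> F x \<le> F y)"

definition additively_homogeneous :: "(('n::finite \<Rightarrow> ereal) \<Rightarrow> ('n \<Rightarrow> ereal)) \<Rightarrow> bool" where
  "additively_homogeneous F \<longleftrightarrow>
     (\<forall>l. l \<noteq> \<infinity> \<longrightarrow> (\<forall>x\<in>trop_vecs. F (trop_shift l x) = trop_shift l (F x)))"

definition pert :: "('n::finite \<Rightarrow> real) \<Rightarrow> (('n \<Rightarrow> ereal) \<Rightarrow> ('n \<Rightarrow> ereal)) \<Rightarrow> (('n \<Rightarrow> ereal) \<Rightarrow> ('n \<Rightarrow> ereal))" where
  "pert u F = (\<lambda>x i. ereal (u i) + F x i)"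

definition sup_norm :: "('n::finite \<Rightarrow> real) \<Rightarrow> real" where
  "sup_norm u = Max (range (\<lambda>i. \<bar>u i\<bar>))"

definition upper_cw :: "(('n::finite \<Rightarrow> ereal) \<Rightarrow> ('n \<Rightarrow> ereal)) \<Rightarrow> ereal" where
  "upper_cw F = Inf {ereal \<mu> | \<mu>. \<exists>z::'n \<Rightarrow> real. \<forall>i. F (\<lambda>j. ereal (z j)) i \<le> ereal (\<mu> + z i)}"

definition lower_cw :: "(('n::finite \<Rightarrow> ereal) \<Rightarrow> ('n \<Rightarrow> ereal)) \<Rightarrow> ereal" where
  "lower_cw F = Sup {ereal \<mu> | \<mu>. \<exists>z::'n \<Rightarrow> real. \<forall>i. F (\<lambda>j. ereal (z j)) i \<ge> ereal (\<mu> + z i)}"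

definition feasible :: "(('n::finite \<Rightarrow> ereal) \<Rightarrow> ('n \<Rightarrow> ereal)) \<Rightarrow> bool" where
  "feasible F \<longleftrightarrow> (\<exists>x\<in>trop_vecs. x \<noteq> trop_zero \<and> x \<le> F x)"

definition feasible_R :: "(('n::finite \<Rightarrow> ereal) \<Rightarrow> ('n \<Rightarrow> ereal)) \<Rightarrow> bool" where
  "feasible_R F \<longleftrightarrow> (\<exists>x::'n \<Rightarrow> real. \<forall>i. ereal (x i) < F (\<lambda>j. ereal (x j)) i)"

text \<open>Condition number w.r.t. a feasibility predicate; values in [0,\<infinity>] as ereal,
  with inverse 0 = \<infinity>, inverse \<infinity> = 0, Inf {} = \<infinity>.\<close>
definition cond_gen :: "((('n::finite \<Rightarrow> ereal) \<Rightarrow> ('n \<Rightarrow> ereal)) \<Rightarrow> bool)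
    \<Rightarrow> (('n \<Rightarrow> ereal) \<Rightarrow> ('n \<Rightarrow> ereal)) \<Rightarrow> ereal" where
  "cond_gen P F =
     (if P F then inverse (Inf {ereal (sup_norm u) | u. \<not> P (pert u F)})
      else inverse (Inf {ereal (sup_norm u) | u. P (pert u F)}))"

definition cond :: "(('n::finite \<Rightarrow> ereal) \<Rightarrow> ('n \<Rightarrow> ereal)) \<Rightarrow> ereal" where
  "cond F = cond_gen feasible F"

definition cond_R :: "(('n::finite \<Rightarrow> ereal) \<Rightarrow> ('n \<Rightarrow> ereal)) \<Rightarrow> ereal" where
  "cond_R F = cond_gen feasible_R F"

end

theory Submission
  imports Defs
begin

text \<open>Both identities are instances of one principle: if feasibility of u + F is decided
  by the sign of a quantity kappa(u + F) lying between kappa(F) + min_i u_i and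
  kappa(F) + max_i u_i, then the sup-norm distance from F to the maps of the opposite
  feasibility status is |kappa(F)|.
  For P_R the quantity is the lower Collatz-Wielandt number, directly from the definitions.
  For P it is the upper one. A nonzero x <= F(x) forces every upper witness mu to be
  nonnegative: shift the witness vector until it touches x from above. Conversely, if P(F) is
  infeasible, the descent x |-> min(max(F(x), x - 1), x) started at 0 converges by continuity to
  a solution of x <= F(x), which must be the zero vector (-oo, ..., -oo); so after finitely
  many steps every coordinate is below -1, and tilting the lower envelope of this finite chain
  by a small slope eps yields z with F(z) <= -eps + z.\<close>

lemma tendsto_fun_componentwise_iff:
  "(f \<longlongrightarrow> (l :: 'a \<Rightarrow> 'b::topological_space)) F \<longleftrightarrow> (\<forall>i. ((\<lambda>c. f c i) \<longlongrightarrow> l i) F)"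
proof -
  have "(f \<longlongrightarrow> l) F \<longleftrightarrow> limitin (product_topology (\<lambda>i. euclidean::'b topology) UNIV) f l F"
    unfolding euclidean_product_topology by simp
  also have "\<dots> \<longleftrightarrow> (\<forall>i. ((\<lambda>c. f c i) \<longlongrightarrow> l i) F)"
    unfolding limitin_componentwise by simp
  finally show ?thesis .
qed

definition topical :: "(('n::finite \<Rightarrow> ereal) \<Rightarrow> ('n \<Rightarrow> ereal)) \<Rightarrow> bool" where
  "topical F \<longleftrightarrow> F ` trop_vecs \<subseteq> trop_vecs \<and> order_preserving F \<and> additively_homogeneous F"

lemma real_vec_in_trop_vecs [simp]: "(\<lambda>j. ereal (z j)) \<in> trop_vecs"
  by (simp add: trop_vecs_def)

lemma topical_not_PInf: "topical F \<Longrightarrow> x \<in> trop_vecs \<Longrightarrow> F x i \<noteq> \<infinity>"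
  by (auto simp: topical_def trop_vecs_def)

lemma topical_mono: "topical F \<Longrightarrow> x \<in> trop_vecs \<Longrightarrow> y \<in> trop_vecs \<Longrightarrow> x \<le> y \<Longrightarrow> F x \<le> F y"
  by (auto simp: topical_def order_preserving_def)

lemma topical_shift:
  "topical F \<Longrightarrow> x \<in> trop_vecs \<Longrightarrow> F (\<lambda>i. ereal c + x i) = (\<lambda>i. ereal c + F x i)"
  by (auto simp: topical_def additively_homogeneous_def trop_shift_def)

lemma pert_zero [simp]: "pert (\<lambda>_. 0) F = F"
  by (simp add: pert_def zero_ereal_def[symmetric])

lemma topical_pert: assumes "topical F" shows "topical (pert u F)"
proof -
  have "pert u F ` trop_vecs \<subseteq> trop_vecs"
    using topical_not_PInf[OF assms] by (auto simp: pert_def trop_vecs_def)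
  moreover have "order_preserving (pert u F)"
    using topical_mono[OF assms]
    by (fastforce simp: order_preserving_def pert_def le_fun_def intro: add_left_mono)
  moreover have "additively_homogeneous (pert u F)"
    using assms by (auto simp: topical_def additively_homogeneous_def pert_def trop_shift_def add.left_commute)
  ultimately show ?thesis by (simp add: topical_def)
qed

lemma continuous_on_pert:
  assumes "continuous_on trop_vecs F" shows "continuous_on trop_vecs (pert u F)"
  unfolding pert_def
proof (intro continuous_on_coordinatewise_then_product)
  fix i
  have "continuous_on trop_vecs (\<lambda>x. F x i)"
    using assms by (rule continuous_on_product_then_coordinatewise)
  then show "continuous_on trop_vecs (\<lambda>x. ereal (u i) + F x i)"
    unfolding continuous_on_def by (auto intro: tendsto_add_ereal_general)
qed

lemma abs_le_sup_norm: "\<bar>u i\<bar> \<le> sup_norm u"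
  unfolding sup_norm_def by (rule Max_ge) auto

lemma sup_norm_const [simp]: "sup_norm (\<lambda>_. c) = \<bar>c\<bar>"
  unfolding sup_norm_def by simp

definition cw_upper_set :: "(('n::finite \<Rightarrow> ereal) \<Rightarrow> ('n \<Rightarrow> ereal)) \<Rightarrow> real set" where
  "cw_upper_set F = {\<mu>. \<exists>z::'n \<Rightarrow> real. \<forall>i. F (\<lambda>j. ereal (z j)) i \<le> ereal (\<mu> + z i)}"

definition cw_lower_set :: "(('n::finite \<Rightarrow> ereal) \<Rightarrow> ('n \<Rightarrow> ereal)) \<Rightarrow> real set" where
  "cw_lower_set F = {\<mu>. \<exists>z::'n \<Rightarrow> real. \<forall>i. ereal (\<mu> + z i) \<le> F (\<lambda>j. ereal (z j)) i}"

lemma upper_cw_eq_Inf: "upper_cw F = Inf (ereal ` cw_upper_set F)"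
  unfolding upper_cw_def cw_upper_set_def by (rule arg_cong[where f = Inf]) auto

lemma lower_cw_eq_Sup: "lower_cw F = Sup (ereal ` cw_lower_set F)"
  unfolding lower_cw_def cw_lower_set_def by (rule arg_cong[where f = Sup]) auto

lemma cw_upper_set_pert:
  assumes "\<mu> \<in> cw_upper_set F" and "\<And>i. u i \<le> c"
  shows "\<mu> + c \<in> cw_upper_set (pert u F)"
proof -
  obtain z where z: "\<And>i. F (\<lambda>j. ereal (z j)) i \<le> ereal (\<mu> + z i)"
    using assms(1) by (auto simp: cw_upper_set_def)
  have "ereal (u i) + F (\<lambda>j. ereal (z j)) i \<le> ereal (\<mu> + c + z i)" for i
    using z[of i] assms(2)[of i] by (cases "F (\<lambda>j. ereal (z j)) i") auto
  then show ?thesis by (auto simp: cw_upper_set_def pert_def)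
qed

lemma cw_upper_set_unpert:
  assumes "\<mu> \<in> cw_upper_set (pert u F)" and "\<And>i. c \<le> u i"
  shows "\<mu> - c \<in> cw_upper_set F"
proof -
  obtain z where z: "\<And>i. ereal (u i) + F (\<lambda>j. ereal (z j)) i \<le> ereal (\<mu> + z i)"
    using assms(1) by (auto simp: cw_upper_set_def pert_def)
  have "F (\<lambda>j. ereal (z j)) i \<le> ereal (\<mu> - c + z i)" for i
    using z[of i] assms(2)[of i] by (cases "F (\<lambda>j. ereal (z j)) i") auto
  then show ?thesis by (auto simp: cw_upper_set_def)
qed

lemma cw_lower_set_pert:
  assumes "\<mu> \<in> cw_lower_set F" and "\<And>i. c \<le> u i"
  shows "\<mu> + c \<in> cw_lower_set (pert u F)"
proof -
  obtain z where z: "\<And>i. ereal (\<mu> + z i) \<le> F (\<lambda>j. ereal (z j)) i"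
    using assms(1) by (auto simp: cw_lower_set_def)
  have "ereal (\<mu> + c + z i) \<le> ereal (u i) + F (\<lambda>j. ereal (z j)) i" for i
    using z[of i] assms(2)[of i] by (cases "F (\<lambda>j. ereal (z j)) i") auto
  then show ?thesis by (auto simp: cw_lower_set_def pert_def)
qed

lemma cw_lower_set_unpert:
  assumes "\<mu> \<in> cw_lower_set (pert u F)" and "\<And>i. u i \<le> c"
  shows "\<mu> - c \<in> cw_lower_set F"
proof -
  obtain z where z: "\<And>i. ereal (\<mu> + z i) \<le> ereal (u i) + F (\<lambda>j. ereal (z j)) i"
    using assms(1) by (auto simp: cw_lower_set_def pert_def)
  have "ereal (\<mu> - c + z i) \<le> F (\<lambda>j. ereal (z j)) i" for i
    using z[of i] assms(2)[of i] by (cases "F (\<lambda>j. ereal (z j)) i") auto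
  then show ?thesis by (auto simp: cw_lower_set_def)
qed

lemma upper_cw_pert_le:
  assumes "\<And>i. u i \<le> c" shows "upper_cw (pert u F) \<le> upper_cw F + ereal c"
proof -
  have "upper_cw (pert u F) - ereal c \<le> upper_cw F"
    unfolding upper_cw_eq_Inf
  proof (rule Inf_greatest, clarify)
    fix \<mu> assume "\<mu> \<in> cw_upper_set F"
    then have "Inf (ereal ` cw_upper_set (pert u F)) \<le> ereal (\<mu> + c)"
      using cw_upper_set_pert assms by (blast intro: Inf_lower)
    then show "Inf (ereal ` cw_upper_set (pert u F)) - ereal c \<le> ereal \<mu>"
      by (simp add: ereal_minus_le)
  qed
  then show ?thesis by (simp add: ereal_minus_le)
qed

lemma upper_cw_pert_ge:
  assumes "\<And>i. c \<le> u i" shows "upper_cw F + ereal c \<le> upper_cw (pert u F)"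
  unfolding upper_cw_eq_Inf
proof (rule Inf_greatest, clarify)
  fix \<mu> assume "\<mu> \<in> cw_upper_set (pert u F)"
  then have "Inf (ereal ` cw_upper_set F) \<le> ereal (\<mu> - c)"
    using cw_upper_set_unpert assms by (blast intro: Inf_lower)
  then show "Inf (ereal ` cw_upper_set F) + ereal c \<le> ereal \<mu>"
    by (simp flip: ereal_le_minus)
qed

lemma lower_cw_pert_le:
  assumes "\<And>i. u i \<le> c" shows "lower_cw (pert u F) \<le> lower_cw F + ereal c"
  unfolding lower_cw_eq_Sup
proof (rule Sup_least, clarify)
  fix \<mu> assume "\<mu> \<in> cw_lower_set (pert u F)"
  then have "ereal (\<mu> - c) \<le> Sup (ereal ` cw_lower_set F)"
    using cw_lower_set_unpert assms by (blast intro: Sup_upper)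
  then show "ereal \<mu> \<le> Sup (ereal ` cw_lower_set F) + ereal c"
    by (simp flip: ereal_minus_le)
qed

lemma lower_cw_pert_ge:
  assumes "\<And>i. c \<le> u i" shows "lower_cw F + ereal c \<le> lower_cw (pert u F)"
proof -
  have "lower_cw F \<le> lower_cw (pert u F) - ereal c"
    unfolding lower_cw_eq_Sup
  proof (rule Sup_least, clarify)
    fix \<mu> assume "\<mu> \<in> cw_lower_set F"
    then have "ereal (\<mu> + c) \<le> Sup (ereal ` cw_lower_set (pert u F))"
      using cw_lower_set_pert assms by (blast intro: Sup_upper)
    then show "ereal \<mu> \<le> Sup (ereal ` cw_lower_set (pert u F)) - ereal c"
      by (simp add: ereal_le_minus)
  qed
  then show ?thesis by (simp add: ereal_le_minus)
qed

locale feasibility_gauge =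
  fixes F :: "('n::finite \<Rightarrow> ereal) \<Rightarrow> ('n \<Rightarrow> ereal)"
    and \<kappa> :: "(('n \<Rightarrow> ereal) \<Rightarrow> ('n \<Rightarrow> ereal)) \<Rightarrow> ereal"
    and P :: "(('n \<Rightarrow> ereal) \<Rightarrow> ('n \<Rightarrow> ereal)) \<Rightarrow> bool"
    and Q :: "ereal \<Rightarrow> bool"
  assumes pert_le: "\<And>u c. (\<And>i. u i \<le> c) \<Longrightarrow> \<kappa> (pert u F) \<le> \<kappa> F + ereal c"
    and pert_ge: "\<And>u c. (\<And>i. c \<le> u i) \<Longrightarrow> \<kappa> F + ereal c \<le> \<kappa> (pert u F)"
    and P_iff: "\<And>u. P (pert u F) \<longleftrightarrow> Q (\<kappa> (pert u F))"
    and Q_pos: "\<And>x. 0 < x \<Longrightarrow> Q x"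
    and Q_neg: "\<And>x. x < 0 \<Longrightarrow> \<not> Q x"
begin

definition status_change_norms :: "ereal set" where
  "status_change_norms = {ereal (sup_norm u) | u. P (pert u F) \<noteq> P F}"

lemma P_iff_Q: "P F \<longleftrightarrow> Q (\<kappa> F)"
  using P_iff[of "\<lambda>_. 0"] by simp

lemma gauge_pert_const: "\<kappa> (pert (\<lambda>_. a) F) = \<kappa> F + ereal a"
  using pert_le[of "\<lambda>_. a" a] pert_ge[of a "\<lambda>_. a"] by simp

lemma gauge_le_pert: "\<kappa> F \<le> \<kappa> (pert u F) + ereal (sup_norm u)"
proof -
  have "- sup_norm u \<le> u i" for i
    using abs_le_sup_norm[of u i] by linarith
  then have "\<kappa> F - ereal (sup_norm u) \<le> \<kappa> (pert u F)"
    using pert_ge[of "- sup_norm u" u] by (simp add: minus_ereal_def)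
  then show ?thesis
    by (simp add: ereal_minus_le)
qed

lemma gauge_pert_le: "\<kappa> (pert u F) \<le> \<kappa> F + ereal (sup_norm u)"
  using pert_le[of u "sup_norm u"] abs_le_sup_norm[of u] by (simp add: abs_le_iff)

lemma Inf_status_change_norms_if_Q:
  assumes "Q (\<kappa> F)"
  shows "Inf status_change_norms = \<kappa> F"
proof (rule order.antisym)
  have nonneg: "0 \<le> \<kappa> F"
    using assms Q_neg not_le by blast
  show "Inf status_change_norms \<le> \<kappa> F"
  proof (cases "\<kappa> F")
    case (real r)
    show ?thesis
    proof (rule ereal_le_epsilon2)
      fix e :: real assume "0 < e"
      then have "\<not> P (pert (\<lambda>_. - (r + e)) F)"
        using P_iff Q_neg gauge_pert_const real by simp
      then have "ereal (r + e) \<in> status_change_norms"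
        using assms P_iff_Q nonneg real \<open>0 < e\<close> unfolding status_change_norms_def
        by (intro CollectI exI[of _ "\<lambda>_. - (r + e)"]) auto
      then show "Inf status_change_norms \<le> \<kappa> F + ereal e"
        using real by (auto intro: Inf_lower)
    qed
  qed (use nonneg in auto)
  show "\<kappa> F \<le> Inf status_change_norms"
    unfolding status_change_norms_def
  proof (rule Inf_greatest, clarify)
    fix u assume "P (pert u F) \<noteq> P F"
    then have "\<kappa> (pert u F) \<le> 0"
      using assms P_iff_Q P_iff Q_pos not_le by blast
    have "\<kappa> F \<le> \<kappa> (pert u F) + ereal (sup_norm u)"
      by (rule gauge_le_pert)
    also have "\<dots> \<le> 0 + ereal (sup_norm u)"
      using \<open>\<kappa> (pert u F) \<le> 0\<close> by (rule add_right_mono)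
    finally show "\<kappa> F \<le> ereal (sup_norm u)"
      by simp
  qed
qed

lemma Inf_status_change_norms_if_not_Q:
  assumes "\<not> Q (\<kappa> F)"
  shows "Inf status_change_norms = - \<kappa> F"
proof (rule order.antisym)
  have nonpos: "\<kappa> F \<le> 0"
    using assms Q_pos not_le by blast
  show "Inf status_change_norms \<le> - \<kappa> F"
  proof (cases "\<kappa> F")
    case (real r)
    show ?thesis
    proof (rule ereal_le_epsilon2)
      fix e :: real assume "0 < e"
      then have "P (pert (\<lambda>_. e - r) F)"
        using P_iff Q_pos gauge_pert_const real by simp
      then have "ereal (e - r) \<in> status_change_norms"
        using assms P_iff_Q nonpos real \<open>0 < e\<close> unfolding status_change_norms_def
        by (intro CollectI exI[of _ "\<lambda>_. e - r"]) auto
      then show "Inf status_change_norms \<le> - \<kappa> F + ereal e"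
        using real by (auto intro: Inf_lower)
    qed
  qed (use nonpos in auto)
  show "- \<kappa> F \<le> Inf status_change_norms"
    unfolding status_change_norms_def
  proof (rule Inf_greatest, clarify)
    fix u assume "P (pert u F) \<noteq> P F"
    then have "0 \<le> \<kappa> (pert u F)"
      using assms P_iff_Q P_iff Q_neg not_le by blast
    then have "0 \<le> \<kappa> F + ereal (sup_norm u)"
      using gauge_pert_le[of u] by (rule order_trans)
    then show "- \<kappa> F \<le> ereal (sup_norm u)"
      by (cases "\<kappa> F") auto
  qed
qed

lemma cond_gen_eq_inverse_abs: "cond_gen P F = inverse \<bar>\<kappa> F\<bar>"
proof (cases "Q (\<kappa> F)")
  case True
  then have "0 \<le> \<kappa> F"
    using Q_neg not_le by blast
  then show ?thesis
    using True P_iff_Q Inf_status_change_norms_if_Q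
    by (simp add: cond_gen_def status_change_norms_def)
next
  case False
  then have "\<kappa> F \<le> 0"
    using Q_pos not_le by blast
  then have "\<bar>\<kappa> F\<bar> = - \<kappa> F"
    by (cases "\<kappa> F") auto
  then show ?thesis
    using False P_iff_Q Inf_status_change_norms_if_not_Q
    by (simp add: cond_gen_def status_change_norms_def)
qed

end

lemma feasible_R_iff_lower_cw_pos:
  assumes "\<And>x i. G (\<lambda>j. ereal (x j)) i \<noteq> \<infinity>"
  shows "feasible_R G \<longleftrightarrow> 0 < lower_cw G"
proof -
  have "feasible_R G \<longleftrightarrow> (\<exists>\<mu>\<in>cw_lower_set G. 0 < \<mu>)"
  proof
    assume "feasible_R G"
    then obtain x where x: "\<And>i. ereal (x i) < G (\<lambda>j. ereal (x j)) i"
      by (auto simp: feasible_R_def)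
    define g where "g i = real_of_ereal (G (\<lambda>j. ereal (x j)) i)" for i
    have g: "G (\<lambda>j. ereal (x j)) i = ereal (g i)" for i
      using x[of i] assms[of x i] by (cases "G (\<lambda>j. ereal (x j)) i") (auto simp: g_def)
    define \<mu> where "\<mu> = Min (range (\<lambda>i. g i - x i))"
    have "\<mu> \<in> range (\<lambda>i. g i - x i)"
      unfolding \<mu>_def by (rule Min_in) auto
    then obtain k where "\<mu> = g k - x k"
      by blast
    moreover have "x k < g k"
      using x[of k] g[of k] by simp
    ultimately have "0 < \<mu>"
      by simp
    moreover have "ereal (\<mu> + x i) \<le> G (\<lambda>j. ereal (x j)) i" for i
    proof -
      have "\<mu> \<le> g i - x i"
        unfolding \<mu>_def by (rule Min_le) auto
      then show ?thesis by (simp add: g)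
    qed
    then have "\<mu> \<in> cw_lower_set G"
      by (auto simp: cw_lower_set_def)
    ultimately show "\<exists>\<mu>\<in>cw_lower_set G. 0 < \<mu>" by blast
  next
    assume "\<exists>\<mu>\<in>cw_lower_set G. 0 < \<mu>"
    then obtain \<mu> z where "0 < \<mu>" and z: "\<And>i. ereal (\<mu> + z i) \<le> G (\<lambda>j. ereal (z j)) i"
      by (auto simp: cw_lower_set_def)
    have "ereal (z i) < G (\<lambda>j. ereal (z j)) i" for i
    proof -
      have "ereal (z i) < ereal (\<mu> + z i)"
        using \<open>0 < \<mu>\<close> by simp
      then show ?thesis
        using z[of i] by (rule less_le_trans)
    qed
    then show "feasible_R G"
      by (auto simp: feasible_R_def)
  qed
  also have "\<dots> \<longleftrightarrow> 0 < lower_cw G"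
    by (auto simp: lower_cw_eq_Sup less_Sup_iff)
  finally show ?thesis .
qed

lemma cw_upper_set_nonneg_if_feasible:
  assumes F: "topical F" and "feasible F" and "\<mu> \<in> cw_upper_set F"
  shows "0 \<le> \<mu>"
proof -
  obtain x where x: "x \<in> trop_vecs" "x \<noteq> trop_zero" "x \<le> F x"
    using assms(2) by (auto simp: feasible_def)
  obtain z where z: "\<And>i. F (\<lambda>j. ereal (z j)) i \<le> ereal (\<mu> + z i)"
    using assms(3) by (auto simp: cw_upper_set_def)
  define I where "I = {i. x i \<noteq> -\<infinity>}"
  have "I \<noteq> {}"
    using x(2) by (auto simp: I_def trop_zero_def fun_eq_iff)
  have x_real: "x i = ereal (real_of_ereal (x i))" if "i \<in> I" for i
    using that x(1) by (cases "x i") (auto simp: I_def trop_vecs_def)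
  \<comment> \<open>shift z up until it touches x from above at some coordinate k\<close>
  define c where "c = Max ((\<lambda>i. real_of_ereal (x i) - z i) ` I)"
  have "c \<in> (\<lambda>i. real_of_ereal (x i) - z i) ` I"
    unfolding c_def using \<open>I \<noteq> {}\<close> by (intro Max_in) auto
  then obtain k where "k \<in> I" and xk: "x k = ereal (c + z k)"
    using x_real by force
  have "x \<le> (\<lambda>i. ereal c + ereal (z i))"
  proof (rule le_funI)
    fix i show "x i \<le> ereal c + ereal (z i)"
    proof (cases "i \<in> I")
      case True
      have "real_of_ereal (x i) - z i \<le> c"
        unfolding c_def using True by (intro Max_ge) auto
      then show ?thesis
        by (subst x_real[OF True]) simp
    qed (simp add: I_def)
  qed
  then have "F x \<le> F (\<lambda>i. ereal c + ereal (z i))"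
    by (intro topical_mono[OF F x(1)]) (simp_all add: trop_vecs_def)
  also have "\<dots> = (\<lambda>i. ereal c + F (\<lambda>j. ereal (z j)) i)"
    by (rule topical_shift[OF F]) simp
  finally have "x k \<le> ereal c + F (\<lambda>j. ereal (z j)) k"
    using x(3) by (auto simp: le_fun_def intro: order_trans)
  also have "\<dots> \<le> ereal c + ereal (\<mu> + z k)"
    using z[of k] by (rule add_left_mono)
  finally show ?thesis
    using xk by simp
qed

lemma exists_pos_slope_below_gap:
  fixes a b :: "'n::finite \<Rightarrow> real"
  assumes "\<And>i. a i < b i"
  shows "\<exists>\<epsilon>>0. \<forall>i. a i + real K * \<epsilon> < b i"
proof -
  define \<delta> where "\<delta> = Min (range (\<lambda>i. b i - a i))"
  have "\<delta> \<in> range (\<lambda>i. b i - a i)"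
    unfolding \<delta>_def by (rule Min_in) auto
  then have "0 < \<delta>"
    using assms by auto
  have "\<delta> \<le> b i - a i" for i
    unfolding \<delta>_def by (rule Min_le) auto
  moreover have "real K * (\<delta> / (real K + 1)) < \<delta>"
    using \<open>0 < \<delta>\<close> by (simp add: field_simps)
  ultimately have "a i + real K * (\<delta> / (real K + 1)) < b i" for i
    by (smt (verit))
  moreover have "0 < \<delta> / (real K + 1)"
    using \<open>0 < \<delta>\<close> by simp
  ultimately show ?thesis
    by blast
qed

lemma cw_upper_set_neg_if_descending_chain:
  fixes y :: "nat \<Rightarrow> 'n::finite \<Rightarrow> real"
  assumes F: "topical F"
    and descent: "\<And>k i. k < K \<Longrightarrow> y (Suc k) i < y k i \<Longrightarrow>
      F (\<lambda>j. ereal (y k j)) i \<le> ereal (y (Suc k) i)"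
    and drop: "\<And>i. y K i < y 0 i"
  shows "\<exists>\<mu><0. \<mu> \<in> cw_upper_set F"
proof -
  obtain \<epsilon> where "0 < \<epsilon>" and K\<epsilon>: "\<And>i. y K i + real K * \<epsilon> < y 0 i"
    using exists_pos_slope_below_gap[of "y K" "y 0" K] drop by blast
  \<comment> \<open>z is the lower envelope of the chain tilted by j\<epsilon>; at each coordinate the minimum
    is attained at some j > 0 where the chain strictly descends\<close>
  define z where "z i = Min ((\<lambda>j. y j i + real j * \<epsilon>) ` {..K})" for i
  have z_le: "z i \<le> y j i + real j * \<epsilon>" if "j \<le> K" for i j
    unfolding z_def using that by (intro Min_le) auto
  have "F (\<lambda>j. ereal (z j)) i \<le> ereal (- \<epsilon> + z i)" for i
  proof -
    have "z i \<in> (\<lambda>j. y j i + real j * \<epsilon>) ` {..K}"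
      unfolding z_def by (intro Min_in) auto
    then obtain j where "j \<le> K" and z_eq: "z i = y j i + real j * \<epsilon>"
      by auto
    have "j \<noteq> 0"
    proof
      assume "j = 0"
      moreover have "z i < y 0 i"
        using z_le[of K i] K\<epsilon>[of i] by simp
      ultimately show False
        using z_eq by simp
    qed
    then obtain k where j: "j = Suc k"
      using not0_implies_Suc by blast
    have "k < K"
      using \<open>j \<le> K\<close> j by simp
    have "y j i < y k i"
      using z_le[of k i] z_eq j \<open>k < K\<close> \<open>0 < \<epsilon>\<close> by (simp add: algebra_simps)
    then have Fk: "F (\<lambda>m. ereal (y k m)) i \<le> ereal (y j i)"
      using descent[OF \<open>k < K\<close>] j by simp
    have "(\<lambda>m. ereal (z m)) \<le> (\<lambda>m. ereal (real k * \<epsilon>) + ereal (y k m))"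
      using z_le \<open>k < K\<close> by (auto simp: le_fun_def algebra_simps)
    then have "F (\<lambda>m. ereal (z m)) \<le> F (\<lambda>m. ereal (real k * \<epsilon>) + ereal (y k m))"
      by (intro topical_mono[OF F]) (simp_all add: trop_vecs_def)
    also have "\<dots> = (\<lambda>m. ereal (real k * \<epsilon>) + F (\<lambda>m. ereal (y k m)) m)"
      by (rule topical_shift[OF F]) simp
    finally have "F (\<lambda>m. ereal (z m)) i \<le> ereal (real k * \<epsilon>) + F (\<lambda>m. ereal (y k m)) i"
      by (simp add: le_fun_def)
    also have "\<dots> \<le> ereal (real k * \<epsilon>) + ereal (y j i)"
      using Fk by (rule add_left_mono)
    also have "\<dots> = ereal (- \<epsilon> + z i)"
      using z_eq j by (simp add: algebra_simps)
    finally show ?thesis .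
  qed
  then have "- \<epsilon> \<in> cw_upper_set F"
    unfolding cw_upper_set_def by blast
  then show ?thesis
    using \<open>0 < \<epsilon>\<close> by (intro exI[of _ "- \<epsilon>"]) simp
qed

definition descent_step :: "(('n::finite \<Rightarrow> ereal) \<Rightarrow> ('n \<Rightarrow> ereal)) \<Rightarrow> ('n \<Rightarrow> ereal) \<Rightarrow> ('n \<Rightarrow> ereal)" where
  "descent_step F x = (\<lambda>i. min (max (F x i) (x i - 1)) (x i))"

definition descent_seq :: "(('n::finite \<Rightarrow> ereal) \<Rightarrow> ('n \<Rightarrow> ereal)) \<Rightarrow> nat \<Rightarrow> ('n \<Rightarrow> ereal)" where
  "descent_seq F k = (descent_step F ^^ k) (\<lambda>_. 0)"

lemma le_descent_step_if_less: "descent_step F x i < x i \<Longrightarrow> F x i \<le> descent_step F x i"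
  by (auto simp: descent_step_def min_def max_def split: if_splits)

lemma le_if_descent_step_fixed:
  assumes "x \<in> trop_vecs" and "descent_step F x = x"
  shows "x \<le> F x"
proof (rule le_funI)
  fix i
  have "x i = min (max (F x i) (x i - 1)) (x i)"
    using assms(2) by (simp add: descent_step_def fun_eq_iff)
  then show "x i \<le> F x i"
    using assms(1) by (cases "x i") (auto simp: trop_vecs_def min_def max_def one_ereal_def split: if_splits)
qed

lemma descent_seq_0 [simp]: "descent_seq F 0 = (\<lambda>_. 0)"
  by (simp add: descent_seq_def)

lemma descent_seq_Suc: "descent_seq F (Suc k) = descent_step F (descent_seq F k)"
  by (simp add: descent_seq_def)

lemma abs_descent_seq_finite: "\<bar>descent_seq F k i\<bar> \<noteq> \<infinity>"
proof (induction k arbitrary: i)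
  case (Suc k)
  then show ?case
    using Suc.IH[of i] by (cases "descent_seq F k i"; cases "F (descent_seq F k) i")
      (auto simp: descent_seq_Suc descent_step_def min_def max_def one_ereal_def)
qed simp

lemma descent_seq_in_trop_vecs: "descent_seq F k \<in> trop_vecs"
proof -
  have "descent_seq F k i \<noteq> \<infinity>" for i
    using abs_descent_seq_finite[of F k i] by auto
  then show ?thesis
    by (simp add: trop_vecs_def)
qed

lemma decseq_descent_seq: "decseq (\<lambda>k. descent_seq F k i)"
  by (rule decseq_SucI) (simp add: descent_seq_Suc descent_step_def)

lemma descent_seq_limit:
  assumes "continuous_on trop_vecs F"
  defines "l \<equiv> \<lambda>i. INF k. descent_seq F k i"
  shows "l \<in> trop_vecs" and "l \<le> F l"
proof -
  have lim: "(\<lambda>k. descent_seq F k i) \<longlonglongrightarrow> l i" for i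
    unfolding l_def by (rule LIMSEQ_INF[OF decseq_descent_seq])
  have "l i \<noteq> \<infinity>" for i
  proof -
    have "l i \<le> 0"
      unfolding l_def by (rule INF_lower2[of 0]) simp_all
    then show ?thesis
      by auto
  qed
  then show l: "l \<in> trop_vecs"
    by (simp add: trop_vecs_def)
  have "(\<lambda>k. descent_seq F k) \<longlonglongrightarrow> l"
    using lim by (simp add: tendsto_fun_componentwise_iff)
  then have "(\<lambda>k. F (descent_seq F k)) \<longlonglongrightarrow> F l"
    by (rule continuous_on_tendsto_compose[OF assms(1) _ l]) (simp add: descent_seq_in_trop_vecs)
  then have "(\<lambda>k. descent_seq F (Suc k) i) \<longlonglongrightarrow> descent_step F l i" for i
    unfolding descent_seq_Suc descent_step_def tendsto_fun_componentwise_iff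
    by (intro tendsto_min tendsto_max tendsto_diff_ereal_general lim tendsto_const) auto
  moreover have "(\<lambda>k. descent_seq F (Suc k) i) \<longlonglongrightarrow> l i" for i
    using lim by (rule LIMSEQ_Suc)
  ultimately have "descent_step F l = l"
    using LIMSEQ_unique by (blast intro: ext)
  then show "l \<le> F l"
    by (rule le_if_descent_step_fixed[OF l])
qed

lemma cw_upper_set_neg_if_infeasible:
  assumes F: "topical F" and "continuous_on trop_vecs F" and "\<not> feasible F"
  shows "\<exists>\<mu><0. \<mu> \<in> cw_upper_set F"
proof -
  let ?y = "descent_seq F"
  have "(\<lambda>i. INF k. ?y k i) = trop_zero"
    using descent_seq_limit[OF assms(2)] assms(3) by (auto simp: feasible_def)
  then have "(INF k. ?y k i) < -1" for i
    by (simp add: trop_zero_def fun_eq_iff)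
  then have "\<exists>k. ?y k i < -1" for i
    by (simp add: INF_less_iff)
  then obtain kf where kf: "\<And>i. ?y (kf i) i < -1"
    by metis
  define K where "K = Max (range kf)"
  have "?y K i < -1" for i
  proof -
    have "kf i \<le> K"
      unfolding K_def by (rule Max_ge) auto
    then have "?y K i \<le> ?y (kf i) i"
      using decseq_descent_seq[of F i] by (simp add: decseq_def)
    then show ?thesis
      using kf[of i] by simp
  qed
  define yr where "yr k i = real_of_ereal (?y k i)" for k i
  have y_yr: "?y k i = ereal (yr k i)" for k i
    using abs_descent_seq_finite[of F k i] by (simp add: yr_def ereal_real')
  show ?thesis
  proof (rule cw_upper_set_neg_if_descending_chain[OF F, of K yr])
    fix k i
    assume "yr (Suc k) i < yr k i"
    then have "descent_step F (?y k) i < ?y k i"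
      by (simp add: y_yr flip: descent_seq_Suc)
    then have "F (?y k) i \<le> ?y (Suc k) i"
      unfolding descent_seq_Suc by (rule le_descent_step_if_less)
    moreover have "?y k = (\<lambda>j. ereal (yr k j))"
      by (simp add: y_yr fun_eq_iff)
    ultimately show "F (\<lambda>j. ereal (yr k j)) i \<le> ereal (yr (Suc k) i)"
      by (simp add: y_yr)
  next
    show "yr K i < yr 0 i" for i
      using \<open>?y K i < -1\<close> by (simp add: y_yr yr_def[of 0] one_ereal_def)
  qed
qed

lemma feasible_iff_upper_cw_nonneg:
  assumes "topical F" and "continuous_on trop_vecs F"
  shows "feasible F \<longleftrightarrow> 0 \<le> upper_cw F"
proof
  assume "feasible F"
  then show "0 \<le> upper_cw F"
    unfolding upper_cw_eq_Inf using cw_upper_set_nonneg_if_feasible[OF assms(1)]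
    by (auto intro: Inf_greatest)
next
  assume "0 \<le> upper_cw F"
  show "feasible F"
  proof (rule ccontr)
    assume "\<not> feasible F"
    then obtain \<mu> where "\<mu> < 0" and "\<mu> \<in> cw_upper_set F"
      using cw_upper_set_neg_if_infeasible assms by blast
    then have "upper_cw F < 0"
      unfolding upper_cw_eq_Inf by (auto simp: Inf_less_iff)
    then show False
      using \<open>0 \<le> upper_cw F\<close> by simp
  qed
qed

theorem mainTheorem1:
  fixes F :: "('n::finite \<Rightarrow> ereal) \<Rightarrow> ('n \<Rightarrow> ereal)"
  assumes "F ` trop_vecs \<subseteq> trop_vecs"
    and "continuous_on trop_vecs F"
    and "order_preserving F"
    and "additively_homogeneous F"
  shows "cond_R F = inverse \<bar>lower_cw F\<bar> \<and> cond F = inverse \<bar>upper_cw F\<bar>"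
proof
  have F: "topical F"
    using assms(1,3,4) by (simp add: topical_def)
  interpret lower: feasibility_gauge F lower_cw feasible_R "\<lambda>x. 0 < x"
  proof
    show "feasible_R (pert u F) \<longleftrightarrow> 0 < lower_cw (pert u F)" for u
      using topical_not_PInf[OF topical_pert[OF F]] by (simp add: feasible_R_iff_lower_cw_pos)
  qed (simp_all add: lower_cw_pert_le lower_cw_pert_ge)
  show "cond_R F = inverse \<bar>lower_cw F\<bar>"
    unfolding cond_R_def by (rule lower.cond_gen_eq_inverse_abs)
  interpret upper: feasibility_gauge F upper_cw feasible "\<lambda>x. 0 \<le> x"
  proof
    show "feasible (pert u F) \<longleftrightarrow> 0 \<le> upper_cw (pert u F)" for u
      by (rule feasible_iff_upper_cw_nonneg[OF topical_pert[OF F] continuous_on_pert[OF assms(2)]])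
  qed (simp_all add: upper_cw_pert_le upper_cw_pert_ge)
  show "cond F = inverse \<bar>upper_cw F\<bar>"
    unfolding cond_def by (rule upper.cond_gen_eq_inverse_abs)
qed

end
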